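(* Let $x$ be an irrational real number and $f_x(t):=f(x+i/t)$ for $t>0$. If $t_0>0$ is a point where $f_x$ has a local minimum, then there exist $g\in\mathrm{PSL}_2(\mathbb{Z})$ with $x+i/t_0\in g\cdot(D_0+n)$ for some $n\in\mathbb{Z}$, and, writing $g\cdot\infty=p/q$ in lowest terms with $q>0$, one has $t_0=\left|q/(qx-p)\right|$ and $f_x(t_0)=2\,|q(qx-p)|$.
   Context: $\mathbb{H}=\{\omega\in\mathbb{C}:\mathrm{Im}(\omega)>0\}$. For $\omega\in\mathbb{H}$, $d(\omega)=\min\{|\alpha+\beta\omega| : \alpha,\beta\in\mathbb{Z},\ (\alpha,\beta)\neq(0,0)\}$ and $f(\omega)=d(\omega)^2/\mathrm{Im}(\omega)$. $\mathrm{PSL}_2(\mathbb{Z})$ acts by $\begin{pmatrix}a&b\\c&d\end{pmatrix}\cdot\omega=\frac{a\omega+b}{c\omega+d}$, with $g\cdot\infty=a/c$ if $c\neq0$ and $\infty$ otherwise. $D_0=\{\omega: -1/2\le\mathrm{Re}(\omega)\le1/2,\ |\omega|\ge1\}$; the sets $g\cdot(D_0+n)$, $g\in\mathrm{PSL}_2(\mathbb{Z})$, $n\in\mathbb{Z}$, cover $\mathbb{H}$, and on such a set with cusp $g\cdot\infty=p/q$ one has $f(x+i/t)=(qx-p)^2t+q^2/t$. *)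

theory Defs
  imports "HOL-Analysis.Analysis"
begin

definition lattice_min :: "complex \<Rightarrow> real" where
  "lattice_min w = Inf {cmod (of_int a + of_int b * w) | a b :: int. (a, b) \<noteq> (0, 0)}"

definition fH :: "complex \<Rightarrow> real" where
  "fH w = (lattice_min w)\<^sup>2 / Im w"

text \<open>Elements of PSL_2(Z) are represented by integer matrices (a,b,c,d) with ad - bc = 1
  (a matrix and its negative act identically).\<close>
definition SL2Z :: "(int \<times> int \<times> int \<times> int) set" where
  "SL2Z = {(a, b, c, d). a * d - b * c = 1}"

fun moebius :: "int \<times> int \<times> int \<times> int \<Rightarrow> complex \<Rightarrow> complex" where
  "moebius (a, b, c, d) w = (of_int a * w + of_int b) / (of_int c * w + of_int d)"

definition D0 :: "complex set" where
  "D0 = {w. 0 < Im w \<and> -1/2 \<le> Re w \<and> Re w \<le> 1/2 \<and> cmod w \<ge> 1}"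

definition translate_tile :: "int \<times> int \<times> int \<times> int \<Rightarrow> int \<Rightarrow> complex set" where
  "translate_tile g n = moebius g ` ((\<lambda>z. z + of_int n) ` D0)"

end

theory Submission
  imports Defs
begin

text \<open>At \<open>\<omega> = x + i/t\<^sub>0\<close> the lattice minimum \<open>d(\<omega>)\<close> is attained at a
  primitive vector \<open>(\<alpha>, \<beta>)\<close>. For every \<open>t\<close> one has
  \<open>f\<^sub>x(t) \<le> |\<alpha> + \<beta>(x + i/t)|\<^sup>2 t = (\<alpha> + \<beta>x)\<^sup>2 t + \<beta>\<^sup>2/t\<close>, with equality at \<open>t\<^sub>0\<close>,
  so this hyperbola has a local minimum at \<open>t\<^sub>0\<close> too; hence \<open>(\<alpha> + \<beta>x)\<^sup>2 t\<^sub>0\<^sup>2 = \<beta>\<^sup>2\<close>,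
  which yields both formulas. Completing \<open>(-\<alpha>, \<beta>)\<close> to a matrix \<open>g\<close> of determinant 1
  (so that \<open>g\<cdot>\<infinity> = -\<alpha>/\<beta>\<close>), the minimality of \<open>|\<alpha> + \<beta>\<omega>|\<close> says precisely that
  \<open>g\<^sup>-\<^sup>1\<omega>\<close>, translated into the strip \<open>|Re| \<le> 1/2\<close>, has modulus at least 1.\<close>

lemma lattice_vector_nonzero:
  assumes "Im w > 0" "(a, b) \<noteq> (0::int, 0::int)"
  shows "of_int a + of_int b * w \<noteq> 0"
proof
  assume z: "of_int a + of_int b * w = 0"
  then have "Im (of_int a + of_int b * w) = 0" by simp
  then have "b = 0" using assms(1) by simp
  with z assms(2) show False by simp
qed

lemma finite_short_lattice_vectors:
  assumes w: "Im w > 0"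
  shows "finite {(a::int, b::int). cmod (of_int a + of_int b * w) \<le> r}"
proof -
  define N :: int where "N = \<lceil>\<bar>r\<bar> + \<bar>r\<bar> / Im w + \<bar>r\<bar> * \<bar>Re w\<bar> / Im w\<rceil>"
  have bound: "\<bar>a\<bar> \<le> N \<and> \<bar>b\<bar> \<le> N" if c: "cmod (of_int a + of_int b * w) \<le> r" for a b :: int
  proof -
    have "\<bar>of_int b * Im w\<bar> \<le> r"
      using abs_Im_le_cmod[of "of_int a + of_int b * w"] c by simp
    then have hb: "\<bar>real_of_int b\<bar> \<le> \<bar>r\<bar> / Im w"
      using w by (simp add: abs_mult field_simps)
    have "\<bar>of_int a + of_int b * Re w\<bar> \<le> r"
      using abs_Re_le_cmod[of "of_int a + of_int b * w"] c by simp
    moreover have "\<bar>real_of_int b * Re w\<bar> = \<bar>real_of_int b\<bar> * \<bar>Re w\<bar>"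
      by (simp add: abs_mult)
    ultimately have "\<bar>real_of_int a\<bar> \<le> \<bar>r\<bar> + \<bar>real_of_int b\<bar> * \<bar>Re w\<bar>"
      by linarith
    also have "\<dots> \<le> \<bar>r\<bar> + \<bar>r\<bar> / Im w * \<bar>Re w\<bar>"
      using hb by (intro add_left_mono mult_right_mono) auto
    finally have ha: "\<bar>real_of_int a\<bar> \<le> \<bar>r\<bar> + \<bar>r\<bar> * \<bar>Re w\<bar> / Im w" by simp
    have "0 \<le> \<bar>r\<bar> / Im w" "0 \<le> \<bar>r\<bar> * \<bar>Re w\<bar> / Im w" using w by auto
    then have "\<bar>real_of_int a\<bar> \<le> of_int N" "\<bar>real_of_int b\<bar> \<le> of_int N"
      unfolding N_def using ha hb le_of_int_ceiling[of "\<bar>r\<bar> + \<bar>r\<bar> / Im w + \<bar>r\<bar> * \<bar>Re w\<bar> / Im w"]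
      by linarith+
    then show ?thesis by linarith
  qed
  then have "{(a, b). cmod (of_int a + of_int b * w) \<le> r} \<subseteq> {-N..N} \<times> {-N..N}"
    by (auto dest!: bound simp: abs_le_iff)
  then show ?thesis by (rule finite_subset) simp
qed

lemma lattice_min_le:
  assumes "(a, b) \<noteq> (0::int, 0::int)"
  shows "lattice_min w \<le> cmod (of_int a + of_int b * w)"
  unfolding lattice_min_def
  by (rule cInf_lower) (use assms in \<open>auto intro!: bdd_belowI[of _ 0]\<close>)

lemma lattice_min_attained:
  assumes w: "Im w > 0"
  obtains \<alpha> \<beta> :: int where "(\<alpha>, \<beta>) \<noteq> (0, 0)"
    and "lattice_min w = cmod (of_int \<alpha> + of_int \<beta> * w)"
    and "\<And>a b. (a, b) \<noteq> (0::int, 0::int) \<Longrightarrow> cmod (of_int \<alpha> + of_int \<beta> * w) \<le> cmod (of_int a + of_int b * w)"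
proof -
  define v where "v = (\<lambda>(a::int, b::int). cmod (of_int a + of_int b * w))"
  define S where "S = {p. p \<noteq> (0, 0) \<and> v p \<le> 1}"
  have "finite S"
    using finite_short_lattice_vectors[OF w, of 1]
    by (rule finite_subset[rotated]) (auto simp: S_def v_def)
  moreover have "(1, 0) \<in> S" by (simp add: S_def v_def)
  ultimately obtain m where m: "m \<in> S" "\<And>p. p \<in> S \<Longrightarrow> v m \<le> v p"
    using ex_is_arg_min_if_finite[of S v] by (force simp: is_arg_min_linorder)
  have min: "v m \<le> v p" if "p \<noteq> (0, 0)" for p
    using m that by (cases "v p \<le> 1") (auto simp: S_def)
  obtain \<alpha> \<beta> where m_eq: "m = (\<alpha>, \<beta>)" by fastforce
  have "lattice_min w = v m"
    unfolding lattice_min_def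
    by (rule cInf_eq_minimum) (use m min m_eq in \<open>auto simp: S_def v_def\<close>)
  then show ?thesis
    using that[of \<alpha> \<beta>] m min m_eq by (auto simp: S_def v_def)
qed

lemma minimal_lattice_vector_coprime:
  assumes w: "Im w > 0" and nz: "(\<alpha>, \<beta>) \<noteq> (0::int, 0::int)"
    and min: "\<And>a b. (a, b) \<noteq> (0::int, 0::int) \<Longrightarrow> cmod (of_int \<alpha> + of_int \<beta> * w) \<le> cmod (of_int a + of_int b * w)"
  shows "coprime \<alpha> \<beta>"
proof -
  define g where "g = gcd \<alpha> \<beta>"
  have g: "g > 0" using nz by (simp add: g_def)
  obtain a b where ab: "\<alpha> = g * a" "\<beta> = g * b"
    unfolding g_def by (meson gcd_dvd1 gcd_dvd2 dvdE)
  with nz have ab_nz: "(a, b) \<noteq> (0, 0)" by auto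
  have "of_int \<alpha> + of_int \<beta> * w = of_int g * (of_int a + of_int b * w :: complex)"
    by (simp add: ab algebra_simps)
  then have "cmod (of_int \<alpha> + of_int \<beta> * w) = of_int g * cmod (of_int a + of_int b * w)"
    using g by (simp add: norm_mult)
  moreover have "cmod (of_int a + of_int b * w) > 0"
    using lattice_vector_nonzero[OF w ab_nz] by simp
  ultimately have "real_of_int g \<le> 1"
    using min[OF ab_nz] by (simp add: mult_le_cancel_right1)
  with g have "g = 1" by linarith
  then show ?thesis by (simp add: g_def coprime_iff_gcd_eq_1)
qed

lemma fH_le_lattice_vector:
  assumes "Im w > 0" "(a, b) \<noteq> (0::int, 0::int)"
  shows "fH w \<le> (cmod (of_int a + of_int b * w))\<^sup>2 / Im w"
proof -
  have "0 \<le> lattice_min w"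
    using lattice_min_attained[OF assms(1)] by (metis norm_ge_zero)
  then have "(lattice_min w)\<^sup>2 \<le> (cmod (of_int a + of_int b * w))\<^sup>2"
    using lattice_min_le[OF assms(2)] by (rule power_mono[rotated])
  then show ?thesis
    unfolding fH_def using assms(1) by (simp add: divide_right_mono)
qed

lemma norm_lattice_vector_vertical:
  "(cmod (of_int a + of_int b * Complex x (1 / t)))\<^sup>2 * t
     = (of_int a + of_int b * x)\<^sup>2 * t + (of_int b)\<^sup>2 / t"
  unfolding cmod_power2
  by (simp add: power_divide power_mult_distrib algebra_simps add_divide_distrib power2_eq_square)

lemma local_min_hyperbola:
  fixes A B t0 \<epsilon> :: real
  assumes t0: "t0 > 0" and \<epsilon>: "\<epsilon> > 0"
    and min: "\<And>t. t > 0 \<Longrightarrow> \<bar>t - t0\<bar> < \<epsilon> \<Longrightarrow> A * t0 + B / t0 \<le> A * t + B / t"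
  shows "A * t0\<^sup>2 = B"
proof -
  have deriv: "((\<lambda>t. A * t + B / t) has_real_derivative A - B / t0\<^sup>2) (at t0)"
    using t0 by (auto intro!: derivative_eq_intros simp: power2_eq_square)
  have "\<forall>t. \<bar>t0 - t\<bar> < min \<epsilon> t0 \<longrightarrow> A * t0 + B / t0 \<le> A * t + B / t"
    by (auto intro: min)
  then have "A - B / t0\<^sup>2 = 0"
    using DERIV_local_min[OF deriv, of "min \<epsilon> t0"] t0 \<epsilon> by simp
  then show ?thesis using t0 by (simp add: field_simps)
qed

lemma Im_moebius_SL2Z:
  assumes "(a, b, c, d) \<in> SL2Z"
  shows "Im (moebius (a, b, c, d) w) = Im w / (cmod (of_int c * w + of_int d))\<^sup>2"
proof -
  have "Im (moebius (a, b, c, d) w)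
      = Im w * (of_int a * of_int d - of_int b * of_int c) / (cmod (of_int c * w + of_int d))\<^sup>2"
    by (simp add: Im_divide' algebra_simps)
  also have "of_int a * of_int d - of_int b * of_int c = (1 :: real)"
    using assms unfolding SL2Z_def by (simp flip: of_int_mult of_int_diff)
  finally show ?thesis by simp
qed

lemma moebius_SL2Z_inverse:
  assumes g: "(a, b, c, d) \<in> SL2Z" and nz: "of_int a - of_int c * w \<noteq> 0"
  shows "moebius (a, b, c, d) (moebius (d, -b, -c, a) w) = w"
proof -
  have det: "of_int a * of_int d - of_int b * of_int c = (1 :: complex)"
    using g unfolding SL2Z_def by (simp flip: of_int_mult of_int_diff)
  have "of_int a * (of_int d * w - of_int b) + of_int b * (of_int a - of_int c * w) = w"
       "of_int c * (of_int d * w - of_int b) + of_int d * (of_int a - of_int c * w) = (1 :: complex)"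
    using det by (simp_all add: algebra_simps)
  then show ?thesis
    using nz by (simp add: add_divide_distrib[symmetric] divide_simps)
qed

lemma SL2Z_inverse_in_SL2Z: "(a, b, c, d) \<in> SL2Z \<Longrightarrow> (d, -b, -c, a) \<in> SL2Z"
  by (simp add: SL2Z_def algebra_simps)

lemma tile_of_minimal_vector:
  assumes w: "Im w > 0" and g: "(a, b, c, d) \<in> SL2Z"
    and min: "\<And>p q. (p, q) \<noteq> (0::int, 0::int) \<Longrightarrow>
                cmod (of_int a - of_int c * w) \<le> cmod (of_int p + of_int q * w)"
  shows "\<exists>n. w \<in> translate_tile (a, b, c, d) n"
proof -
  have det: "a * d - b * c = 1" using g by (simp add: SL2Z_def)
  define D where "D = of_int a - of_int c * w"
  have "(-a, c) \<noteq> (0, 0)" using det by auto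
  then have D: "D \<noteq> 0"
    using lattice_vector_nonzero[OF w, of "-a" c] by (simp add: D_def algebra_simps)
  define u where "u = moebius (d, -b, -c, a) w"
  have u: "u = (of_int d * w - of_int b) / D" by (simp add: u_def D_def algebra_simps)
  have "Im u = Im w / (cmod D)\<^sup>2"
    unfolding u_def Im_moebius_SL2Z[OF SL2Z_inverse_in_SL2Z[OF g]] by (simp add: D_def algebra_simps)
  with w D have Im_u: "Im u > 0" by simp
  define n where "n = \<lfloor>Re u + 1/2\<rfloor>"
  define z where "z = u - of_int n"
  have "(-(b + n * a), d + n * c) \<noteq> (0, 0)"
  proof
    assume "(-(b + n * a), d + n * c) = (0, 0)"
    then have "b = - n * a" "d = - n * c" by auto
    with det show False by (simp add: algebra_simps)
  qed
  \<comment> \<open>\<open>z\<close> is a quotient of two lattice vectors with denominator \<open>D\<close>, so the minimality of \<open>|D|\<close> gives \<open>|z| \<ge> 1\<close>.\<close>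
  from min[OF this] have "cmod D \<le> cmod (of_int (-(b + n * a)) + of_int (d + n * c) * w)"
    by (simp add: D_def)
  moreover have "z = (of_int (-(b + n * a)) + of_int (d + n * c) * w) / D"
    using D by (simp add: z_def u D_def field_simps)
  ultimately have "cmod z \<ge> 1"
    using D by (simp add: norm_divide)
  moreover have "-1/2 \<le> Re z" "Re z \<le> 1/2"
    unfolding z_def n_def by (simp_all, linarith+)
  ultimately have "z \<in> D0"
    using Im_u by (simp add: D0_def z_def)
  moreover have "moebius (a, b, c, d) (z + of_int n) = w"
    using moebius_SL2Z_inverse[OF g] D by (simp add: z_def u_def D_def)
  ultimately have "w \<in> translate_tile (a, b, c, d) n"
    unfolding translate_tile_def by (metis image_eqI)
  then show ?thesis ..
qed

lemma local_min_fH_vertical: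
  fixes x t0 :: real and \<alpha> \<beta> :: int
  defines "\<omega> \<equiv> Complex x (1 / t0)"
  assumes t0: "t0 > 0"
    and locmin: "\<exists>\<epsilon>>0. \<forall>t. t > 0 \<and> \<bar>t - t0\<bar> < \<epsilon> \<longrightarrow> fH \<omega> \<le> fH (Complex x (1 / t))"
    and nz: "(\<alpha>, \<beta>) \<noteq> (0, 0)"
    and attained: "lattice_min \<omega> = cmod (of_int \<alpha> + of_int \<beta> * \<omega>)"
  shows "\<beta> \<noteq> 0"
    and "t0 = \<bar>of_int \<beta> / (of_int \<alpha> + of_int \<beta> * x)\<bar>"
    and "fH \<omega> = 2 * \<bar>of_int \<beta> * (of_int \<alpha> + of_int \<beta> * x)\<bar>"
proof -
  define L where "L = real_of_int \<alpha> + of_int \<beta> * x"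
  define A where "A = L\<^sup>2"
  define B where "B = (real_of_int \<beta>)\<^sup>2"
  have fH_le: "fH (Complex x (1 / t)) \<le> A * t + B / t" if "t > 0" for t
    using fH_le_lattice_vector[of "Complex x (1 / t)", OF _ nz] that
    by (simp add: norm_lattice_vector_vertical A_def B_def L_def)
  have fH_\<omega>: "fH \<omega> = A * t0 + B / t0"
    using norm_lattice_vector_vertical[of \<alpha> \<beta> x t0]
    unfolding fH_def attained by (simp add: \<omega>_def A_def B_def L_def)
  obtain \<epsilon> where \<epsilon>: "\<epsilon> > 0"
    and min: "\<And>t. t > 0 \<Longrightarrow> \<bar>t - t0\<bar> < \<epsilon> \<Longrightarrow> fH \<omega> \<le> fH (Complex x (1 / t))"
    using locmin by blast
  have "A * t0 + B / t0 \<le> A * t + B / t" if "t > 0" "\<bar>t - t0\<bar> < \<epsilon>" for t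
    using min[OF that] fH_le[OF that(1)] fH_\<omega> by linarith
  with t0 \<epsilon> have AB: "A * t0\<^sup>2 = B" by (rule local_min_hyperbola)
  show \<beta>: "\<beta> \<noteq> 0"
  proof
    assume "\<beta> = 0"
    with AB t0 have "\<alpha> = 0" by (simp add: A_def B_def L_def)
    with \<open>\<beta> = 0\<close> nz show False by simp
  qed
  have "(t0 * \<bar>L\<bar>)\<^sup>2 = A * t0\<^sup>2"
    by (simp add: A_def power_mult_distrib)
  also have "\<dots> = \<bar>real_of_int \<beta>\<bar>\<^sup>2"
    by (simp add: AB B_def)
  finally have t0L: "t0 * \<bar>L\<bar> = \<bar>real_of_int \<beta>\<bar>"
    by (rule power2_eq_imp_eq) (use t0 in simp_all)
  with \<beta> have "L \<noteq> 0" by auto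
  with t0L show "t0 = \<bar>of_int \<beta> / (of_int \<alpha> + of_int \<beta> * x)\<bar>"
    unfolding L_def[symmetric] abs_divide by (simp add: eq_divide_eq)
  have "fH \<omega> = 2 * (A * t0)"
    using AB t0 unfolding fH_\<omega> by (simp add: field_simps power2_eq_square)
  also have "A * t0 = \<bar>L\<bar> * (t0 * \<bar>L\<bar>)"
    by (simp add: A_def power2_eq_square abs_mult_self_eq)
  finally show "fH \<omega> = 2 * \<bar>of_int \<beta> * (of_int \<alpha> + of_int \<beta> * x)\<bar>"
    unfolding t0L L_def[symmetric] by (simp add: abs_mult)
qed

lemma reduced_fraction_abs_eq:
  fixes a c p q :: int and x :: real
  assumes "coprime a c" "coprime p q" "c \<noteq> 0" "q \<noteq> 0"
    and "of_int p / of_int q = (of_int a / of_int c :: real)"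
  shows "\<bar>q\<bar> = \<bar>c\<bar>" and "\<bar>of_int q * x - of_int p\<bar> = \<bar>of_int c * x - of_int a\<bar>"
proof -
  from assms(3-5) have "p * c = a * q"
    by (simp add: field_simps flip: of_int_mult)
  then have "\<bar>p\<bar> * \<bar>c\<bar> = \<bar>a\<bar> * \<bar>q\<bar>" by (simp flip: abs_mult)
  then show q: "\<bar>q\<bar> = \<bar>c\<bar>"
    using coprime_crossproduct_int[OF assms(2,1)] by simp
  have "\<bar>of_int q * x - of_int p\<bar> = \<bar>of_int q\<bar> * \<bar>x - of_int p / of_int q\<bar>"
    using assms(4) by (simp add: abs_mult [symmetric] algebra_simps)
  also have "\<dots> = \<bar>of_int c\<bar> * \<bar>x - of_int a / of_int c\<bar>"
    using q assms(5) by (metis of_int_abs)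
  also have "\<dots> = \<bar>of_int c * x - of_int a\<bar>"
    using assms(3) by (simp add: abs_mult [symmetric] algebra_simps)
  finally show "\<bar>of_int q * x - of_int p\<bar> = \<bar>of_int c * x - of_int a\<bar>" .
qed

theorem proposition4:
  fixes x t0 :: real
  assumes irr: "x \<notin> \<rat>"
    and t0pos: "t0 > 0"
    and locmin: "\<exists>\<epsilon>>0. \<forall>t. t > 0 \<and> \<bar>t - t0\<bar> < \<epsilon> \<longrightarrow>
                   fH (Complex x (1 / t0)) \<le> fH (Complex x (1 / t))"
  shows "\<exists>a b c d n. (a, b, c, d) \<in> SL2Z \<and>
           Complex x (1 / t0) \<in> translate_tile (a, b, c, d) n \<and>
           c \<noteq> 0 \<and>
           (\<forall>p q :: int. coprime p q \<and> q > 0 \<and> real_of_int p / real_of_int q = real_of_int a / real_of_int c \<longrightarrow>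
              t0 = \<bar>real_of_int q / (real_of_int q * x - real_of_int p)\<bar> \<and>
              fH (Complex x (1 / t0)) = 2 * \<bar>real_of_int q * (real_of_int q * x - real_of_int p)\<bar>)"
proof -
  define \<omega> where "\<omega> = Complex x (1 / t0)"
  have \<omega>: "Im \<omega> > 0" using t0pos by (simp add: \<omega>_def)
  obtain \<alpha> \<beta> where nz: "(\<alpha>, \<beta>) \<noteq> (0, 0)"
    and attained: "lattice_min \<omega> = cmod (of_int \<alpha> + of_int \<beta> * \<omega>)"
    and min: "\<And>a b. (a, b) \<noteq> (0::int, 0::int) \<Longrightarrow> cmod (of_int \<alpha> + of_int \<beta> * \<omega>) \<le> cmod (of_int a + of_int b * \<omega>)"
    using lattice_min_attained[OF \<omega>] by metis
  note vertical = local_min_fH_vertical[OF t0pos locmin nz attained[unfolded \<omega>_def]]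
  have "coprime (-\<alpha>) \<beta>"
    using minimal_lattice_vector_coprime[OF \<omega> nz min] by simp
  then obtain d v where "d * (-\<alpha>) + v * \<beta> = 1"
    using bezout_int[of "-\<alpha>" \<beta>] by (metis coprime_iff_gcd_eq_1)
  then have g: "(-\<alpha>, -v, \<beta>, d) \<in> SL2Z" by (simp add: SL2Z_def algebra_simps)
  have "of_int (-\<alpha>) - of_int \<beta> * \<omega> = - (of_int \<alpha> + of_int \<beta> * \<omega>)" by simp
  then obtain n where "\<omega> \<in> translate_tile (-\<alpha>, -v, \<beta>, d) n"
    using tile_of_minimal_vector[OF \<omega> g] min by (metis norm_minus_cancel)
  moreover have "t0 = \<bar>of_int q / (of_int q * x - of_int p)\<bar> \<and>
      fH \<omega> = 2 * \<bar>of_int q * (of_int q * x - of_int p)\<bar>"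
    if "coprime p q" "q > 0" "of_int p / of_int q = (of_int (-\<alpha>) / of_int \<beta> :: real)" for p q
  proof -
    from that(2) have "q \<noteq> 0" by simp
    note cusp = reduced_fraction_abs_eq[OF \<open>coprime (-\<alpha>) \<beta>\<close> that(1) vertical(1) this that(3)]
    have "\<bar>real_of_int q\<bar> = \<bar>of_int \<beta>\<bar>"
      using cusp(1) by (simp flip: of_int_abs)
    moreover have "\<bar>of_int q * x - of_int p\<bar> = \<bar>of_int \<alpha> + of_int \<beta> * x\<bar>"
      using cusp(2) by (simp add: algebra_simps)
    ultimately show ?thesis
      using vertical(2,3) unfolding \<omega>_def abs_divide abs_mult by simp
  qed
  ultimately show ?thesis
    using g vertical(1) unfolding \<omega>_def by blast
qed

end
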